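(* Let $\ell$ be a label, $A,B$ types and $\rho_{11},\rho_{12},\rho_{21},\rho_{22}$ rows such that all concatenations below are defined. If $A \simeq B$, $\rho_{11}\odot\rho_{12} \simeq \rho_{21}\odot\rho_{22}$ and $\ell \notin \mathit{dom}(\rho_{11})\cup\mathit{dom}(\rho_{21})$, then $\rho_{11}\odot(\ell{:}A;\cdot)\odot\rho_{12} \simeq \rho_{21}\odot(\ell{:}B;\cdot)\odot\rho_{22}$.
   Context: Types and rows share one grammar: $A,B,C,\rho ::= X \mid \alpha \mid \star \mid \iota \mid A\to B \mid \forall X{:}K.\,A \mid [\rho] \mid \langle\rho\rangle \mid \cdot \mid \ell{:}A;\rho$, where $X$ ranges over type variables (bound by $\forall$), $\alpha$ over type names, $\star$ is the dynamic type (also serving as the dynamic row), $\iota$ over base types, $[\rho]$ and $\langle\rho\rangle$ are record and variant types, $\cdot$ is the empty row, $\ell$ ranges over labels, and $K\in\{\mathsf T,\mathsf R\}$ is a kind. Types are identified up to renaming of bound variables; $\mathit{ftv}(A)$ is the set of free type variables. Row matching $\rho \triangleright_\ell A,\rho'$ is defined by: $(\ell{:}A;\rho)\triangleright_\ell A,\rho$; if $\ell'\neq\ell$ and $\rho\triangleright_\ell A,\rho'$ then $(\ell'{:}B;\rho)\triangleright_\ell A,(\ell'{:}B;\rho')$; and $\star\triangleright_\ell \star,\star$. $\mathbf{QPoly}(A)$ holds iff $A$ is not of the form $\forall X{:}K.\,B$ and $\star$ occurs in $A$. Row concatenation $\rho_1\odot\rho_2$ is defined only when $\rho_1=\ell_1{:}A_1;\dots;\ell_n{:}A_n;\cdot$,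 and then equals $\ell_1{:}A_1;\dots;\ell_n{:}A_n;\rho_2$. $\mathit{dom}(\rho)$ is the set of labels in the top-level label prefix of $\rho$. Consistency $\simeq$ is defined inductively: $A\simeq A$; $\star\simeq A$; $A\simeq\star$; $A_1\to A_2\simeq B_1\to B_2$ if $A_1\simeq B_1$ and $A_2\simeq B_2$; $\forall X{:}K.A\simeq\forall X{:}K.B$ if $A\simeq B$; $\forall X{:}K.A\simeq B$ if $\mathbf{QPoly}(B)$, $X\notin\mathit{ftv}(B)$ and $A\simeq B$; $A\simeq\forall X{:}K.B$ if $\mathbf{QPoly}(A)$, $X\notin\mathit{ftv}(A)$ and $A\simeq B$; $[\rho_1]\simeq[\rho_2]$ and $\langle\rho_1\rangle\simeq\langle\rho_2\rangle$ if $\rho_1\simeq\rho_2$; $\ell{:}A;\rho_1\simeq B$ if $B\triangleright_\ell B',\rho_2$, $A\simeq B'$ and $\rho_1\simeq\rho_2$; $A\simeq \ell{:}B;\rho_2$ if $A\triangleright_\ell A',\rho_1$, $A'\simeq B$ and $\rho_1\simeq\rho_2$. *)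

theory Defs
  imports Main
begin

datatype kind = KT | KR

text \<open>Types and rows share one grammar. Type variables bound by forall are
represented by de Bruijn indices (so types are identified up to renaming of
bound variables); 'n are type names, 'b base types, 'l labels.\<close>
datatype ('n, 'b, 'l) ty =
    TVar nat
  | TName 'n
  | Dyn
  | Base 'b
  | Fun "('n, 'b, 'l) ty" "('n, 'b, 'l) ty"
  | Forall kind "('n, 'b, 'l) ty"
  | Record "('n, 'b, 'l) ty"
  | Variant "('n, 'b, 'l) ty"
  | REmpty
  | RCons 'l "('n, 'b, 'l) ty" "('n, 'b, 'l) ty"

fun shift :: "nat \<Rightarrow> ('n, 'b, 'l) ty \<Rightarrow> ('n, 'b, 'l) ty" where
  "shift c (TVar n) = (if n < c then TVar n else TVar (Suc n))"
| "shift c (TName a) = TName a"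
| "shift c Dyn = Dyn"
| "shift c (Base i) = Base i"
| "shift c (Fun A B) = Fun (shift c A) (shift c B)"
| "shift c (Forall K A) = Forall K (shift (Suc c) A)"
| "shift c (Record r) = Record (shift c r)"
| "shift c (Variant r) = Variant (shift c r)"
| "shift c REmpty = REmpty"
| "shift c (RCons l A r) = RCons l (shift c A) (shift c r)"

inductive rmatch :: "('n, 'b, 'l) ty \<Rightarrow> 'l \<Rightarrow> ('n, 'b, 'l) ty \<Rightarrow> ('n, 'b, 'l) ty \<Rightarrow> bool" where
  rm_head: "rmatch (RCons l A r) l A r"
| rm_skip: "l' \<noteq> l \<Longrightarrow> rmatch r l A r' \<Longrightarrow> rmatch (RCons l' B r) l A (RCons l' B r')"
| rm_dyn: "rmatch Dyn l Dyn Dyn"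

fun dyn_occurs :: "('n, 'b, 'l) ty \<Rightarrow> bool" where
  "dyn_occurs (TVar n) = False"
| "dyn_occurs (TName a) = False"
| "dyn_occurs Dyn = True"
| "dyn_occurs (Base i) = False"
| "dyn_occurs (Fun A B) = (dyn_occurs A \<or> dyn_occurs B)"
| "dyn_occurs (Forall K A) = dyn_occurs A"
| "dyn_occurs (Record r) = dyn_occurs r"
| "dyn_occurs (Variant r) = dyn_occurs r"
| "dyn_occurs REmpty = False"
| "dyn_occurs (RCons l A r) = (dyn_occurs A \<or> dyn_occurs r)"

definition QPoly :: "('n, 'b, 'l) ty \<Rightarrow> bool" where
  "QPoly A \<longleftrightarrow> (\<forall>K B. A \<noteq> Forall K B) \<and> dyn_occurs A"

text \<open>Consistency. In the rules for forall vs. non-forall, the side condition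
X not free in B together with A ~ B becomes A ~ (shift 0 B) in de Bruijn form.\<close>
inductive consistent :: "('n, 'b, 'l) ty \<Rightarrow> ('n, 'b, 'l) ty \<Rightarrow> bool" (infix "\<simeq>" 50) where
  c_refl: "A \<simeq> A"
| c_dynL: "Dyn \<simeq> A"
| c_dynR: "A \<simeq> Dyn"
| c_fun: "A1 \<simeq> B1 \<Longrightarrow> A2 \<simeq> B2 \<Longrightarrow> Fun A1 A2 \<simeq> Fun B1 B2"
| c_all: "A \<simeq> B \<Longrightarrow> Forall K A \<simeq> Forall K B"
| c_allL: "QPoly B \<Longrightarrow> A \<simeq> shift 0 B \<Longrightarrow> Forall K A \<simeq> B"
| c_allR: "QPoly A \<Longrightarrow> shift 0 A \<simeq> B \<Longrightarrow> A \<simeq> Forall K B"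
| c_rec: "r1 \<simeq> r2 \<Longrightarrow> Record r1 \<simeq> Record r2"
| c_var: "r1 \<simeq> r2 \<Longrightarrow> Variant r1 \<simeq> Variant r2"
| c_consL: "rmatch B l B' r2 \<Longrightarrow> A \<simeq> B' \<Longrightarrow> r1 \<simeq> r2 \<Longrightarrow> RCons l A r1 \<simeq> B"
| c_consR: "rmatch A l A' r1 \<Longrightarrow> A' \<simeq> B \<Longrightarrow> r1 \<simeq> r2 \<Longrightarrow> A \<simeq> RCons l B r2"

text \<open>A row is closed if it is a finite label list ending in the empty row;
concatenation is only defined for a closed left argument.\<close>
fun closed_row :: "('n, 'b, 'l) ty \<Rightarrow> bool" where
  "closed_row REmpty = True"
| "closed_row (RCons l A r) = closed_row r"
| "closed_row _ = False"

fun rconcat :: "('n, 'b, 'l) ty \<Rightarrow> ('n, 'b, 'l) ty \<Rightarrow> ('n, 'b, 'l) ty" (infixr "\<odot>" 65) where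
  "rconcat REmpty r2 = r2"
| "rconcat (RCons l A r) r2 = RCons l A (rconcat r r2)"
| "rconcat _ r2 = undefined"

fun rdom :: "('n, 'b, 'l) ty \<Rightarrow> 'l set" where
  "rdom (RCons l A r) = insert l (rdom r)"
| "rdom _ = {}"

end

theory Submission
  imports Defs
begin

text \<open>Both sides match the label \<open>l\<close>: with field type \<open>A\<close> and remainder
\<open>r11 \<odot> r12\<close> on the left, with \<open>B\<close> and \<open>r21 \<odot> r22\<close> on the right. So it suffices that
consistency survives inserting consistent fields under one label: if \<open>X\<close> and \<open>Y\<close> match
\<open>l\<close> with consistent field types and consistent remainders, then \<open>X \<simeq> Y\<close>. The only real case is a derivation step
that matches a label \<open>m \<noteq> l\<close> of one row inside the other; it lifts to \<open>X\<close> and \<open>Y\<close>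
because matching two distinct labels in a row can be done in either order.\<close>

lemma rmatch_concat:
  assumes "closed_row r1" and "l \<notin> rdom r1"
  shows "rmatch (r1 \<odot> RCons l A r2) l A (r1 \<odot> r2)"
  using assms by (induction r1) (auto intro: rmatch.intros)

lemma rmatch_commute:
  assumes "rmatch Y l B Y'" and "rmatch Y' k C Z" and "k \<noteq> l"
  shows "\<exists>R. rmatch Y k C R \<and> rmatch R l B Z"
  using assms
proof (induction arbitrary: Z rule: rmatch.induct)
  case (rm_head l B Y')
  have "rmatch (RCons l B Y') k C (RCons l B Z)"
    using rm_head by (simp add: rmatch.rm_skip)
  moreover have "rmatch (RCons l B Z) l B Z" by (rule rmatch.rm_head)
  ultimately show ?case by blast
next
  case (rm_skip m l Y B Y' D)
  note IH = rm_skip.IH and m_l = rm_skip.hyps(1) and Y_Y' = rm_skip.hyps(2)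
  from \<open>rmatch (RCons m D Y') k C Z\<close> show ?case
  proof cases
    case rm_head
    then have "rmatch (RCons m D Y) k C Y" by (simp add: rmatch.rm_head)
    with Y_Y' rm_head show ?thesis by blast
  next
    case (rm_skip Z')
    then obtain R where "rmatch Y k C R" and "rmatch R l B Z'"
      using IH \<open>k \<noteq> l\<close> by blast
    then have "rmatch (RCons m D Y) k C (RCons m D R)"
      and "rmatch (RCons m D R) l B (RCons m D Z')"
      using m_l rm_skip by (simp_all add: rmatch.rm_skip)
    then show ?thesis using rm_skip by blast
  qed
next
  case (rm_dyn l)
  from \<open>rmatch Dyn k C Z\<close> have "C = Dyn \<and> Z = Dyn" by cases simp_all
  then show ?case by (auto intro: exI[of _ Dyn] rmatch.rm_dyn)
qed

lemma consistent_rmatch_same_rest: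
  assumes "rmatch X l A Z" and "rmatch Y l B Z" and "A \<simeq> B"
  shows "X \<simeq> Y"
  using assms
proof (induction arbitrary: Y rule: rmatch.induct)
  case (rm_head l A Z)
  then show ?case by (blast intro: c_consL c_refl)
next
  case (rm_skip m l X A X' D)
  from \<open>rmatch Y l B (RCons m D X')\<close> show ?case
  proof cases
    case rm_head
    then show ?thesis using rm_skip.hyps \<open>A \<simeq> B\<close> by (blast intro: c_consR c_refl rmatch.intros)
  next
    case (rm_skip Y1)
    then show ?thesis using rm_skip.IH \<open>A \<simeq> B\<close> by (blast intro: c_consL c_refl rmatch.intros)
  qed
next
  case (rm_dyn l)
  then show ?case by (blast intro: c_dynL)
qed

lemma rmatch_non_RCons:
  assumes "rmatch X l A X'" and "\<And>m C r. X' \<noteq> RCons m C r"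
  shows "X = RCons l A X' \<or> X = Dyn"
  using assms by (cases rule: rmatch.cases) auto

lemma consistent_rmatch_non_RCons:
  assumes "X' \<simeq> Y'" and "rmatch X l A X'" and "rmatch Y l B Y'" and "A \<simeq> B"
    and "(\<forall>m C r. X' \<noteq> RCons m C r) \<or> (\<forall>m C r. Y' \<noteq> RCons m C r)"
  shows "X \<simeq> Y"
  using assms(5)
proof
  assume "\<forall>m C r. X' \<noteq> RCons m C r"
  with assms(2) have "X = RCons l A X' \<or> X = Dyn" by (simp add: rmatch_non_RCons)
  moreover have "RCons l A X' \<simeq> Y" using assms(3,4,1) by (rule c_consL)
  ultimately show ?thesis using c_dynL by blast
next
  assume "\<forall>m C r. Y' \<noteq> RCons m C r"
  with assms(3) have "Y = RCons l B Y' \<or> Y = Dyn" by (simp add: rmatch_non_RCons)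
  moreover have "X \<simeq> RCons l B Y'" using assms(2,4,1) by (rule c_consR)
  ultimately show ?thesis using c_dynR by blast
qed

lemma consistent_rmatchI:
  assumes "X' \<simeq> Y'" and "rmatch X l A X'" and "rmatch Y l B Y'" and "A \<simeq> B"
  shows "X \<simeq> Y"
  using assms(1) assms
  \<comment> \<open>\<open>X' \<simeq> Y'\<close> stays among the case premises: the cases closed at \<open>qed\<close> need it.\<close>
proof (induction arbitrary: X Y rule: consistent.induct)
  case (c_refl Z)
  show ?case using c_refl.prems(2-4) by (rule consistent_rmatch_same_rest)
next
  case (c_consL Y' m D R2 C X1')
  from \<open>rmatch X l A (RCons m C X1')\<close> show ?case
  proof cases
    case rm_head
    show ?thesis unfolding rm_head using c_consL.prems(3,4,1) by (rule consistent.c_consL)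
  next
    case (rm_skip X1)
    obtain R where Y_R: "rmatch Y m D R" and "rmatch R l B R2"
      using rmatch_commute[OF c_consL.prems(3) c_consL.hyps(1)] rm_skip(2) by blast
    have "X1 \<simeq> R"
      using c_consL.IH(2) c_consL.hyps(3) rm_skip(3) \<open>rmatch R l B R2\<close> c_consL.prems(4) .
    with Y_R c_consL.hyps(2) show ?thesis unfolding rm_skip(1) by (rule consistent.c_consL)
  qed
next
  case (c_consR X' m C R1 D Y1')
  from \<open>rmatch Y l B (RCons m D Y1')\<close> show ?case
  proof cases
    case rm_head
    show ?thesis unfolding rm_head using c_consR.prems(2,4,1) by (rule consistent.c_consR)
  next
    case (rm_skip Y1)
    obtain R where X_R: "rmatch X m C R" and "rmatch R l A R1"
      using rmatch_commute[OF c_consR.prems(2) c_consR.hyps(1)] rm_skip(2) by blast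
    have "R \<simeq> Y1"
      using c_consR.IH(2) c_consR.hyps(3) \<open>rmatch R l A R1\<close> rm_skip(3) c_consR.prems(4) .
    with X_R c_consR.hyps(2) show ?thesis unfolding rm_skip(1) by (rule consistent.c_consR)
  qed
qed (rule consistent_rmatch_non_RCons, assumption+, simp)+

theorem mainTheorem10:
  fixes l :: 'l and A B r11 r12 r21 r22 :: "('n, 'b, 'l) ty"
  assumes "closed_row r11" and "closed_row r21"
    and "A \<simeq> B"
    and "r11 \<odot> r12 \<simeq> r21 \<odot> r22"
    and "l \<notin> rdom r11 \<union> rdom r21"
  shows "r11 \<odot> RCons l A REmpty \<odot> r12 \<simeq> r21 \<odot> RCons l B REmpty \<odot> r22"
proof -
  have "rmatch (r11 \<odot> RCons l A r12) l A (r11 \<odot> r12)"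
    and "rmatch (r21 \<odot> RCons l B r22) l B (r21 \<odot> r22)"
    using assms by (simp_all add: rmatch_concat)
  then have "r11 \<odot> RCons l A r12 \<simeq> r21 \<odot> RCons l B r22"
    by (rule consistent_rmatchI[OF assms(4) _ _ assms(3)])
  then show ?thesis by simp
qed

end
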